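(* In the algorithm setup, let $i$ be a variable, $b\in\partial i$ a factor, $1\le\ell\le L$, and $s_j\ge0$ integers for $j\in\partial b\setminus\{i\}$. Then $$\mathbb E\Big[\prod_{j\in\partial b\setminus i}(u^\ell_{j\to b})^{s_j}\,\Big|\,\mathcal G_i^\ell\Big]=\prod_{j\in\partial b\setminus i}\mathbb E\big[(u^\ell_{j\to b})^{s_j}\,\big|\,\mathcal G_i^\ell\big].$$
   Context: Algorithm setup. Fix $r\ge2$ and a predicate $f:\{\pm1\}^r\to\{0,1\}$, identified with its multilinear extension $f(x)=\sum_{S\subseteq[r]}\hat f(S)\prod_{\iota\in S}x_\iota$ on $\mathbb R^r$, and assume $\hat f(S)=0$ whenever $|S|=1$. Fix $\delta>0$ and let $L=\lfloor1/\delta\rfloor$. Let $G=(V,E)$ be a hypergraph whose hyperedges (factors) $a$ are ordered $r$-tuples $\partial a=(v_{a,1},\dots,v_{a,r})$ of distinct vertices (variables), which is $d$-index-regular: every variable lies in exactly $d$ factors, and for each $\iota\in[r]$ it is the $\iota$-th entry of exactly $d/r$ factors. Write $\partial i$ for the set of factors containing $i$. Assume the bipartite variable–factor incidence graph (factor graph) of $G$ has no cycle of length less than $4L+4$. For a factor $a$ and $j\in\partial a$, $\mathsf D_{j;a}f$ is the partial derivative of (multilinear) $f$ in the coordinate $\iota$ with $v_{a,\iota}=j$. Fix $K>0$ and functions $F_{\to,\ell},F_\ell:\mathbb R^\ell\to[-K,K]$ for $0\le\ell\le L-1$ (constants when $\ell=0$). Randomness: $z_i^0$, $i\in V$, i.i.d.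 $\mathcal N(0,\delta)$; set $z^0_{i\to a}=z_i^0$, $w_i^0=w^0_{i\to a}=0$. For $\ell=0,\dots,L-1$: $A^\ell_{i\to a}=F_{\to,\ell}(u^1_{i\to a},\dots,u^\ell_{i\to a})$; with $\mathbf z^\ell_{\partial b\to b}=(z^\ell_{v_{b,1}\to b},\dots,z^\ell_{v_{b,r}\to b})$, $w^{\ell+1}_{i\to a}=(d-1)^{-1/2}\sum_{b\in\partial i\setminus a}\mathsf D_{i;b}f(\mathbf z^\ell_{\partial b\to b})$, $u^{\ell+1}_{i\to a}=w^{\ell+1}_{i\to a}-w^\ell_{i\to a}$, $z^{\ell+1}_{i\to a}=z_i^0+\sum_{s=1}^{\ell+1}A^{s-1}_{i\to a}u^s_{i\to a}$. Sigma-algebras: the distance between variables $i,j$ is the least $k$ such that there are variables $i=v_0,\dots,v_k=j$ with consecutive ones sharing a factor. $\mathsf B_i(\ell)$ is the set of variables at distance $\le\ell$ from $i$; $\mathcal G_i^\ell=\sigma(z_j^0:j\in\mathsf B_i(\ell))$. *)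

theory Defs
  imports "HOL-Probability.Probability"
begin

text \<open>A factor a has ordered vertex tuple (vx a 0, ..., vx a (r-1)) (0-indexed).\<close>

definition vset :: "('a \<Rightarrow> nat \<Rightarrow> 'v) \<Rightarrow> nat \<Rightarrow> 'a \<Rightarrow> 'v set" where
  "vset vx r a = vx a ` {..<r}"

definition fdeg :: "'a set \<Rightarrow> ('a \<Rightarrow> nat \<Rightarrow> 'v) \<Rightarrow> nat \<Rightarrow> 'v \<Rightarrow> 'a set" where
  "fdeg E vx r i = {a \<in> E. i \<in> vset vx r a}"

definition pos :: "('a \<Rightarrow> nat \<Rightarrow> 'v) \<Rightarrow> nat \<Rightarrow> 'a \<Rightarrow> 'v \<Rightarrow> nat" where
  "pos vx r b j = (THE \<iota>. \<iota> < r \<and> vx b \<iota> = j)"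

text \<open>The factor graph has no cycle of length (2k) less than n.
  A cycle of length 2k (k >= 2) alternates k distinct variables and k distinct factors.\<close>
definition no_short_cycle :: "'a set \<Rightarrow> ('a \<Rightarrow> nat \<Rightarrow> 'v) \<Rightarrow> nat \<Rightarrow> nat \<Rightarrow> bool" where
  "no_short_cycle E vx r n \<longleftrightarrow>
     \<not> (\<exists>k vs fs. 2 \<le> k \<and> 2 * k < n \<and> length vs = k \<and> length fs = k \<and>
          distinct vs \<and> distinct fs \<and> set fs \<subseteq> E \<and>
          (\<forall>t<k. vs ! t \<in> vset vx r (fs ! t) \<and> vs ! ((t + 1) mod k) \<in> vset vx r (fs ! t)))"

definition adjv :: "'a set \<Rightarrow> ('a \<Rightarrow> nat \<Rightarrow> 'v) \<Rightarrow> nat \<Rightarrow> 'v \<Rightarrow> 'v \<Rightarrow> bool" where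
  "adjv E vx r j k \<longleftrightarrow> (\<exists>a\<in>E. j \<in> vset vx r a \<and> k \<in> vset vx r a)"

definition vball :: "'v set \<Rightarrow> 'a set \<Rightarrow> ('a \<Rightarrow> nat \<Rightarrow> 'v) \<Rightarrow> nat \<Rightarrow> 'v \<Rightarrow> nat \<Rightarrow> 'v set" where
  "vball V E vx r i l = {j \<in> V. \<exists>k\<le>l. (adjv E vx r ^^ k) i j}"

definition cube :: "nat \<Rightarrow> (nat \<Rightarrow> real) set" where
  "cube r = (\<Pi>\<^sub>E \<iota>\<in>{..<r}. {-1, 1})"

definition fourier :: "nat \<Rightarrow> ((nat \<Rightarrow> real) \<Rightarrow> real) \<Rightarrow> nat set \<Rightarrow> real" where
  "fourier r f S = (\<Sum>x\<in>cube r. f x * (\<Prod>\<iota>\<in>S. x \<iota>)) / 2 ^ r"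

definition mlext :: "nat \<Rightarrow> ((nat \<Rightarrow> real) \<Rightarrow> real) \<Rightarrow> (nat \<Rightarrow> real) \<Rightarrow> real" where
  "mlext r f x = (\<Sum>S\<in>Pow {..<r}. fourier r f S * (\<Prod>\<iota>\<in>S. x \<iota>))"

definition mlderiv :: "nat \<Rightarrow> ((nat \<Rightarrow> real) \<Rightarrow> real) \<Rightarrow> nat \<Rightarrow> (nat \<Rightarrow> real) \<Rightarrow> real" where
  "mlderiv r f \<iota> x = (\<Sum>S\<in>{S\<in>Pow {..<r}. \<iota> \<in> S}. fourier r f S * (\<Prod>\<kappa>\<in>S - {\<iota>}. x \<kappa>))"

text \<open>A history h s i a stores w^s_{i->a} for s up to the current step.\<close>
definition u_of :: "(nat \<Rightarrow> 'v \<Rightarrow> 'a \<Rightarrow> real) \<Rightarrow> nat \<Rightarrow> 'v \<Rightarrow> 'a \<Rightarrow> real" where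
  "u_of h s i a = h s i a - h (s - 1) i a"

text \<open>A^l_{i->a} = F_{->,l}(u^1,...,u^l), with the argument vector indexed 0..l-1.\<close>
definition A_of :: "(nat \<Rightarrow> (nat \<Rightarrow> real) \<Rightarrow> real) \<Rightarrow> (nat \<Rightarrow> 'v \<Rightarrow> 'a \<Rightarrow> real) \<Rightarrow> nat \<Rightarrow> 'v \<Rightarrow> 'a \<Rightarrow> real" where
  "A_of Fto h l i a = Fto l (restrict (\<lambda>k. u_of h (k + 1) i a) {..<l})"

definition z_of :: "('v \<Rightarrow> real) \<Rightarrow> (nat \<Rightarrow> (nat \<Rightarrow> real) \<Rightarrow> real) \<Rightarrow> (nat \<Rightarrow> 'v \<Rightarrow> 'a \<Rightarrow> real)
    \<Rightarrow> nat \<Rightarrow> 'v \<Rightarrow> 'a \<Rightarrow> real" where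
  "z_of z0 Fto h l i a = z0 i + (\<Sum>s\<in>{1..l}. A_of Fto h (s - 1) i a * u_of h s i a)"

primrec whist :: "nat \<Rightarrow> 'a set \<Rightarrow> ('a \<Rightarrow> nat \<Rightarrow> 'v) \<Rightarrow> nat \<Rightarrow> ((nat \<Rightarrow> real) \<Rightarrow> real)
    \<Rightarrow> (nat \<Rightarrow> (nat \<Rightarrow> real) \<Rightarrow> real) \<Rightarrow> ('v \<Rightarrow> real) \<Rightarrow> nat \<Rightarrow> nat \<Rightarrow> 'v \<Rightarrow> 'a \<Rightarrow> real" where
  "whist r E vx d f Fto z0 0 = (\<lambda>s i a. 0)"
| "whist r E vx d f Fto z0 (Suc l) =
     (let h = whist r E vx d f Fto z0 l in
      (\<lambda>s i a. if s \<le> l then h s i a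
        else (1 / sqrt (real d - 1)) *
          (\<Sum>b\<in>fdeg E vx r i - {a}.
             mlderiv r (\<lambda>x. f x) (pos vx r b i) (\<lambda>\<iota>. z_of z0 Fto h l (vx b \<iota>) b))))"

text \<open>u^l_{j->b} as a function of the initial Gaussian vector z0.\<close>
definition umsg :: "nat \<Rightarrow> 'a set \<Rightarrow> ('a \<Rightarrow> nat \<Rightarrow> 'v) \<Rightarrow> nat \<Rightarrow> ((nat \<Rightarrow> real) \<Rightarrow> real)
    \<Rightarrow> (nat \<Rightarrow> (nat \<Rightarrow> real) \<Rightarrow> real) \<Rightarrow> ('v \<Rightarrow> real) \<Rightarrow> nat \<Rightarrow> 'v \<Rightarrow> 'a \<Rightarrow> real" where
  "umsg r E vx d f Fto z0 l j b = u_of (whist r E vx d f Fto z0 l) l j b"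

text \<open>z^0_i i.i.d. N(0, delta): product of normal laws with standard deviation sqrt delta.\<close>
definition gauss_space :: "'v set \<Rightarrow> real \<Rightarrow> ('v \<Rightarrow> real) measure" where
  "gauss_space V \<delta> = (\<Pi>\<^sub>M i\<in>V. density lborel (normal_density 0 (sqrt \<delta>)))"

definition gen_sigma :: "('v \<Rightarrow> real) measure \<Rightarrow> 'v set \<Rightarrow> ('v \<Rightarrow> real) measure" where
  "gen_sigma M B = sigma (space M)
     {(\<lambda>\<omega>. \<omega> j) -` A \<inter> space M | j A. j \<in> B \<and> A \<in> sets borel}"

end

theory Submission
  imports Defs
begin

text \<open>
  The message from j to b at time l is a function of the initial values of the variables in a
  dependency set: those reached from j by walks of length at most l whose first factor is not b.
  If the dependency sets of two distinct j, j' in b - {i} shared a variable outside the ball of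
  radius l around i, the two walks reaching it would have to move away from i at every step, and
  together with b they would close a cycle of length at most 4l + 2 in the factor graph, which
  the girth assumption excludes. So outside the ball the messages depend on pairwise disjoint
  sets of independent Gaussian coordinates. Conditioning on the coordinates in the ball amounts
  to integrating out the remaining ones, and by independence the integral of the product is the
  product of the integrals. Integrability holds because the messages grow polynomially in the
  initial values.
\<close>

section \<open>Walks in the factor graph\<close>

definition reachable_within :: "'a set \<Rightarrow> ('a \<Rightarrow> nat \<Rightarrow> 'v) \<Rightarrow> nat \<Rightarrow> 'v \<Rightarrow> nat \<Rightarrow> 'v \<Rightarrow> bool" where
  "reachable_within E vx r i n v \<longleftrightarrow> (\<exists>k\<le>n. (adjv E vx r ^^ k) i v)"

lemma reachable_within_mono:
  "reachable_within E vx r i n v \<Longrightarrow> n \<le> m \<Longrightarrow> reachable_within E vx r i m v"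
  unfolding reachable_within_def by (meson order_trans)

lemma reachable_within_refl: "reachable_within E vx r i 0 i"
  unfolding reachable_within_def by auto

lemma reachable_within_Suc:
  assumes "reachable_within E vx r i n u" "c \<in> E" "u \<in> vset vx r c" "v \<in> vset vx r c"
  shows "reachable_within E vx r i (Suc n) v"
proof -
  obtain k where k: "k \<le> n" "(adjv E vx r ^^ k) i u"
    using assms(1) unfolding reachable_within_def by auto
  have "adjv E vx r u v" using assms(2-4) unfolding adjv_def by auto
  with k show ?thesis
    unfolding reachable_within_def by (intro exI[of _ "Suc k"]) auto
qed

lemma vball_eq: "vball V E vx r i l = {j \<in> V. reachable_within E vx r i l j}"
  unfolding vball_def reachable_within_def ..

definition is_walk :: "'a set \<Rightarrow> ('a \<Rightarrow> nat \<Rightarrow> 'v) \<Rightarrow> nat \<Rightarrow> (nat \<Rightarrow> 'v) \<Rightarrow> (nat \<Rightarrow> 'a) \<Rightarrow> nat \<Rightarrow> bool" where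
  "is_walk E vx r vw cw n \<longleftrightarrow>
     (\<forall>t<n. cw t \<in> E \<and> vw t \<in> vset vx r (cw t) \<and> vw (Suc t) \<in> vset vx r (cw t))"

lemma is_walk_reachable_within:
  assumes "is_walk E vx r vw cw n" "reachable_within E vx r i a (vw t)" "t + p \<le> n"
  shows "reachable_within E vx r i (a + p) (vw (t + p))"
  using assms(3)
proof (induction p)
  case (Suc p)
  then have "t + p < n" by simp
  with assms(1) have "cw (t + p) \<in> E" "vw (t + p) \<in> vset vx r (cw (t + p))"
      "vw (Suc (t + p)) \<in> vset vx r (cw (t + p))"
    unfolding is_walk_def by auto
  with Suc show ?case using reachable_within_Suc by fastforce
qed (use assms(2) in simp)

text \<open>The variables whose initial values the message from j to a at time l reads;
  the value at j itself is never read.\<close>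

primrec msg_deps :: "'a set \<Rightarrow> ('a \<Rightarrow> nat \<Rightarrow> 'v) \<Rightarrow> nat \<Rightarrow> nat \<Rightarrow> 'v \<Rightarrow> 'a \<Rightarrow> 'v set" where
  "msg_deps E vx r 0 j a = {}"
| "msg_deps E vx r (Suc l) j a = msg_deps E vx r l j a \<union>
     (\<Union>c\<in>fdeg E vx r j - {a}. \<Union>k\<in>vset vx r c - {j}. insert k (msg_deps E vx r l k c))"

lemma msg_deps_walk:
  assumes "k \<in> msg_deps E vx r l j a"
  shows "\<exists>n vw cw. 1 \<le> n \<and> n \<le> l \<and> vw 0 = j \<and> vw n = k \<and> is_walk E vx r vw cw n"
  using assms
proof (induction l arbitrary: j a)
  case (Suc l)
  show ?case
  proof (cases "k \<in> msg_deps E vx r l j a")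
    case True
    then show ?thesis using Suc.IH by (meson le_Suc_eq)
  next
    case False
    then obtain c k' where c: "c \<in> E" "j \<in> vset vx r c" "k' \<in> vset vx r c"
        and k: "k = k' \<or> k \<in> msg_deps E vx r l k' c"
      using Suc.prems by (auto simp: fdeg_def)
    show ?thesis
    proof (cases "k = k'")
      case True
      then show ?thesis using c unfolding is_walk_def
        by (intro exI[of _ 1] exI[of _ "\<lambda>t. if t = 0 then j else k"] exI[of _ "\<lambda>_. c"]) auto
    next
      case False
      then obtain n vw cw where w: "1 \<le> n" "n \<le> l" "vw 0 = k'" "vw n = k" "is_walk E vx r vw cw n"
        using k Suc.IH by blast
      let ?vw = "\<lambda>t. if t = 0 then j else vw (t - 1)" and ?cw = "\<lambda>t. if t = 0 then c else cw (t - 1)"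
      have "is_walk E vx r ?vw ?cw (Suc n)"
        using w(3,5) c unfolding is_walk_def by (auto simp: less_Suc_eq_0_disj)
      then show ?thesis using w by (intro exI[of _ "Suc n"] exI[of _ ?vw] exI[of _ ?cw]) auto
    qed
  qed
qed simp

lemma msg_deps_subset:
  assumes "\<forall>a\<in>E. vset vx r a \<subseteq> V"
  shows "msg_deps E vx r l j a \<subseteq> V"
proof (induction l arbitrary: j a)
  case (Suc l)
  have "vset vx r c \<subseteq> V" if "c \<in> fdeg E vx r j" for c
    using that assms unfolding fdeg_def by auto
  with Suc.IH show ?case by simp blast
qed simp

section \<open>Short cycles from two geodesics\<close>

lemma no_short_cycle_mono:
  assumes "no_short_cycle E vx r n" "m \<le> n"
  shows "no_short_cycle E vx r m"
proof -
  have "2 * k < m \<Longrightarrow> 2 * k < n" for k using assms(2) by simp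
  then show ?thesis using assms(1) unfolding no_short_cycle_def by blast
qed

lemma two_paths_close_cycle:
  fixes vw vw' :: "nat \<Rightarrow> 'v" and cw cw' :: "nat \<Rightarrow> 'a" and X b :: 'a and m m' :: nat
  defines "vs \<equiv> map vw [0..<Suc m] @ rev (map vw' [0..<Suc m'])"
    and "fs \<equiv> map cw [0..<m] @ X # rev (map cw' [0..<m']) @ [b]"
  assumes path: "\<forall>t<m. vw t \<in> vset vx r (cw t) \<and> vw (Suc t) \<in> vset vx r (cw t)"
      "\<forall>t<m'. vw' t \<in> vset vx r (cw' t) \<and> vw' (Suc t) \<in> vset vx r (cw' t)"
    and ends: "vw m \<in> vset vx r X" "vw' m' \<in> vset vx r X" "vw 0 \<in> vset vx r b" "vw' 0 \<in> vset vx r b"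
    and t: "t < m + m' + 2"
  shows "vs ! t \<in> vset vx r (fs ! t) \<and> vs ! ((t + 1) mod (m + m' + 2)) \<in> vset vx r (fs ! t)"
proof -
  consider "t < m" | "t = m" | "m < t" "t \<le> m + m'" | "t = m + m' + 1"
    using t by linarith
  then show ?thesis
  proof cases
    case 1
    have "vs ! t = vw t" "vs ! Suc t = vw (Suc t)" "fs ! t = cw t"
      using 1 unfolding vs_def fs_def by (auto simp: nth_append simp del: upt_Suc)
    moreover have "(t + 1) mod (m + m' + 2) = Suc t" using 1 by simp
    ultimately show ?thesis using path(1) 1 by simp
  next
    case 2
    have "vs ! t = vw m" "vs ! Suc t = vw' m'" "fs ! t = X"
      using 2 unfolding vs_def fs_def by (simp_all add: nth_append rev_nth del: upt_Suc)
    moreover have "(t + 1) mod (m + m' + 2) = Suc t" using 2 by simp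
    ultimately show ?thesis using ends(1,2) by simp
  next
    case 3
    define c where "c = m' + m - t"
    have c: "c < m'" "t = m + m' - c" using 3 unfolding c_def by auto
    have "vs ! t = vw' (Suc c)" "vs ! Suc t = vw' c" "fs ! t = cw' c"
      using 3 c unfolding vs_def fs_def by (auto simp: nth_append rev_nth simp del: upt_Suc)
    moreover have "(t + 1) mod (m + m' + 2) = Suc t" using 3 by simp
    ultimately show ?thesis using path(2) c(1) by simp
  next
    case 4
    have "vs ! t = vw' 0" "vs ! 0 = vw 0" "fs ! t = b"
      using 4 unfolding vs_def fs_def by (simp_all add: nth_append rev_nth del: upt_Suc)
    moreover have "(t + 1) mod (m + m' + 2) = 0" using 4 by simp
    ultimately show ?thesis using ends(3,4) by simp
  qed
qed

lemma short_cycle_of_two_paths: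
  assumes E: "b \<in> E" "X \<in> E" "\<forall>t<m. cw t \<in> E" "\<forall>t<m'. cw' t \<in> E"
    and path: "\<forall>t<m. vw t \<in> vset vx r (cw t) \<and> vw (Suc t) \<in> vset vx r (cw t)"
      "\<forall>t<m'. vw' t \<in> vset vx r (cw' t) \<and> vw' (Suc t) \<in> vset vx r (cw' t)"
    and ends: "vw m \<in> vset vx r X" "vw' m' \<in> vset vx r X" "vw 0 \<in> vset vx r b" "vw' 0 \<in> vset vx r b"
    and distinct_vertices: "distinct (map vw [0..<Suc m] @ map vw' [0..<Suc m'])"
    and distinct_factors: "distinct (map cw [0..<m] @ map cw' [0..<m'] @ [X, b])"
    and size: "2 * (m + m' + 2) < n"
  shows "\<not> no_short_cycle E vx r n"
proof -
  define vs where "vs = map vw [0..<Suc m] @ rev (map vw' [0..<Suc m'])"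
  define fs where "fs = map cw [0..<m] @ X # rev (map cw' [0..<m']) @ [b]"
  have "length vs = m + m' + 2" "length fs = m + m' + 2" unfolding vs_def fs_def by simp_all
  moreover have "distinct vs" "distinct fs" "set fs \<subseteq> E"
    using distinct_vertices distinct_factors E unfolding vs_def fs_def by auto
  moreover have "\<forall>t<m + m' + 2. vs ! t \<in> vset vx r (fs ! t) \<and>
      vs ! ((t + 1) mod (m + m' + 2)) \<in> vset vx r (fs ! t)"
    using two_paths_close_cycle[OF path ends] unfolding vs_def fs_def by blast
  ultimately show ?thesis
    using size unfolding no_short_cycle_def by (intro notI) (metis le_add2 mult_2)
qed

definition geodesic :: "'a set \<Rightarrow> ('a \<Rightarrow> nat \<Rightarrow> 'v) \<Rightarrow> nat \<Rightarrow> 'v \<Rightarrow> (nat \<Rightarrow> 'v) \<Rightarrow> (nat \<Rightarrow> 'a) \<Rightarrow> nat \<Rightarrow> bool" where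
  "geodesic E vx r i vw cw n \<longleftrightarrow> is_walk E vx r vw cw n \<and>
     (\<forall>t\<le>n. reachable_within E vx r i (Suc t) (vw t) \<and> \<not> reachable_within E vx r i t (vw t))"

lemma geodesic_step:
  assumes "geodesic E vx r i vw cw n" "t < n"
  shows "cw t \<in> E" "vw t \<in> vset vx r (cw t)" "vw (Suc t) \<in> vset vx r (cw t)"
    "reachable_within E vx r i (Suc t) (vw t)" "\<not> reachable_within E vx r i (Suc t) (vw (Suc t))"
  using assms unfolding geodesic_def is_walk_def by auto

lemma geodesic_vertex_level:
  assumes "geodesic E vx r i vw cw n" "geodesic E vx r i vw' cw' n'" "t \<le> n" "t' \<le> n'"
    and "vw t = vw' t'"
  shows "t = t'"
proof (rule ccontr)
  have lv: "reachable_within E vx r i (Suc t) (vw t)" "\<not> reachable_within E vx r i t (vw t)"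
    "reachable_within E vx r i (Suc t') (vw t)" "\<not> reachable_within E vx r i t' (vw t)"
    using assms unfolding geodesic_def by auto
  assume "t \<noteq> t'"
  then consider "Suc t \<le> t'" | "Suc t' \<le> t" by linarith
  then show False
    by cases (use reachable_within_mono[OF lv(1)] reachable_within_mono[OF lv(3)] lv in auto)
qed

lemma geodesic_factor_level:
  assumes g: "geodesic E vx r i vw cw n" and g': "geodesic E vx r i vw' cw' n'"
    and "t < n" "t' < n'" "cw t = cw' t'"
  shows "t = t'"
proof (rule ccontr)
  note s = geodesic_step[OF g \<open>t < n\<close>] and s' = geodesic_step[OF g' \<open>t' < n'\<close>]
  assume "t \<noteq> t'"
  then consider "Suc t \<le> t'" | "Suc t' \<le> t" by linarith
  then show False
  proof cases
    case 1
    have "reachable_within E vx r i (Suc (Suc t)) (vw' (Suc t'))"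
      using reachable_within_Suc[OF s(4) s(1,2)] s'(3) assms(5) by simp
    from reachable_within_mono[OF this, of "Suc t'"] 1 s'(5) show False by simp
  next
    case 2
    have "reachable_within E vx r i (Suc (Suc t')) (vw (Suc t))"
      using reachable_within_Suc[OF s'(4) s'(1,2)] s(3) assms(5) by simp
    from reachable_within_mono[OF this, of "Suc t"] 2 s(5) show False by simp
  qed
qed

lemma geodesic_factor_avoids_root:
  assumes g: "geodesic E vx r i vw cw n" and "t < n" "i \<in> vset vx r c"
  shows "cw t \<noteq> c"
proof
  note s = geodesic_step[OF g \<open>t < n\<close>]
  assume "cw t = c"
  then have "reachable_within E vx r i 1 (vw (Suc t))"
    using reachable_within_Suc[OF reachable_within_refl s(1)] s(3) assms(3) by simp
  from reachable_within_mono[OF this, of "Suc t"] s(5) show False by simp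
qed

lemma walk_leaving_ball_is_geodesic:
  assumes b: "b \<in> E" "i \<in> vset vx r b" "vw 0 \<in> vset vx r b"
    and w: "is_walk E vx r vw cw n" "n \<le> l" "\<not> reachable_within E vx r i l (vw n)"
  shows "n = l" "geodesic E vx r i vw cw n"
proof -
  have start: "reachable_within E vx r i 1 (vw 0)"
    using reachable_within_Suc[OF reachable_within_refl b] by simp
  have up: "reachable_within E vx r i (Suc t) (vw t)" if "t \<le> n" for t
    using is_walk_reachable_within[OF w(1) start, of t] that by simp
  show "n = l"
  proof (rule ccontr)
    assume "n \<noteq> l"
    then show False using reachable_within_mono[OF up[of n], of l] w(2,3) by simp
  qed
  have "\<not> reachable_within E vx r i t (vw t)" if "t \<le> n" for t
  proof
    assume "reachable_within E vx r i t (vw t)"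
    then have "reachable_within E vx r i n (vw n)"
      using is_walk_reachable_within[OF w(1), of i t t "n - t"] that by simp
    from reachable_within_mono[OF this w(2)] w(3) show False by simp
  qed
  then show "geodesic E vx r i vw cw n" using up w(1) unfolding geodesic_def by blast
qed

text \<open>Two geodesics of length l starting at distinct neighbours of i inside the factor b
  and ending at the same variable close a cycle of length at most 4l + 2 in the factor graph.\<close>
locale geodesic_pair =
  fixes E :: "'a set" and vx :: "'a \<Rightarrow> nat \<Rightarrow> 'v" and r :: nat and i :: 'v and b :: 'a
    and l :: nat and vw vw' :: "nat \<Rightarrow> 'v" and cw cw' :: "nat \<Rightarrow> 'a"
  assumes root: "b \<in> E" "i \<in> vset vx r b" "vw 0 \<in> vset vx r b" "vw' 0 \<in> vset vx r b"
    and starts_differ: "vw 0 \<noteq> vw' 0"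
    and geo: "geodesic E vx r i vw cw l" "geodesic E vx r i vw' cw' l"
    and meet: "vw l = vw' l"
begin

definition first_meet :: nat where
  "first_meet = (LEAST t. vw t = vw' t)"

lemma first_meet: "0 < first_meet" "first_meet \<le> l" "vw first_meet = vw' first_meet"
  and before_first_meet: "t < first_meet \<Longrightarrow> vw t \<noteq> vw' t"
proof -
  show le: "first_meet \<le> l" and eq: "vw first_meet = vw' first_meet"
    unfolding first_meet_def using meet by (rule Least_le, rule LeastI)
  show "0 < first_meet"
  proof (rule ccontr)
    assume "\<not> 0 < first_meet"
    then show False using eq starts_differ by simp
  qed
  show "t < first_meet \<Longrightarrow> vw t \<noteq> vw' t" unfolding first_meet_def by (rule not_less_Least)
qed

lemma inj_vertices: "inj_on vw {..l}" "inj_on vw' {..l}"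
  using geodesic_vertex_level[OF geo(1) geo(1)] geodesic_vertex_level[OF geo(2) geo(2)]
  unfolding inj_on_def by auto

lemma distinct_vertices:
  assumes "m \<le> first_meet" "m' < first_meet"
  shows "distinct (map vw [0..<Suc m] @ map vw' [0..<Suc m'])"
proof -
  have ml: "{0..<Suc m} \<subseteq> {..l}" "{0..<Suc m'} \<subseteq> {..l}" using assms first_meet(2) by auto
  have "vw t \<noteq> vw' t'" if "t \<le> m" "t' \<le> m'" for t t'
  proof
    assume "vw t = vw' t'"
    moreover have "t = t'"
      using geodesic_vertex_level[OF geo _ _ \<open>vw t = vw' t'\<close>] that assms first_meet(2) by simp
    ultimately show False using before_first_meet[of t] that assms by simp
  qed
  then show ?thesis
    using inj_on_subset[OF inj_vertices(1) ml(1)] inj_on_subset[OF inj_vertices(2) ml(2)]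
    by (auto simp: distinct_map simp del: upt_Suc)
qed

lemma inj_factors: "inj_on cw {..<l}" "inj_on cw' {..<l}"
  using geodesic_factor_level[OF geo(1) geo(1)] geodesic_factor_level[OF geo(2) geo(2)]
  unfolding inj_on_def by auto

lemma root_not_on_geodesics: "b \<notin> cw ` {..<l}" "b \<notin> cw' ` {..<l}"
  using geodesic_factor_avoids_root[OF geo(1) _ root(2)] geodesic_factor_avoids_root[OF geo(2) _ root(2)]
  by blast+

lemma distinct_factors:
  assumes "m \<le> l" "m' \<le> l" and apart: "\<forall>t<min m m'. cw t \<noteq> cw' t"
    and X: "X \<notin> cw ` {..<m} \<union> cw' ` {..<m'}" "X \<noteq> b"
  shows "distinct (map cw [0..<m] @ map cw' [0..<m'] @ [X, b])"
proof -
  have "cw t \<noteq> cw' t'" if "t < m" "t' < m'" for t t'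
  proof
    assume "cw t = cw' t'"
    moreover have "t = t'"
      using geodesic_factor_level[OF geo _ _ \<open>cw t = cw' t'\<close>] that assms(1,2) by simp
    ultimately show False using apart that by simp
  qed
  moreover have "inj_on cw {0..<m}" "inj_on cw' {0..<m'}"
    by (rule inj_on_subset[OF inj_factors(1)], use assms(1) in auto)
      (rule inj_on_subset[OF inj_factors(2)], use assms(2) in auto)
  moreover have "b \<notin> cw ` {0..<m}" "b \<notin> cw' ` {0..<m'}"
    using root_not_on_geodesics assms(1,2) by auto
  ultimately show ?thesis
    using X by (auto simp: distinct_map lessThan_atLeast0)
qed

lemma walk_prefix:
  assumes "m \<le> l"
  shows "\<forall>t<m. cw t \<in> E" "\<forall>t<m. vw t \<in> vset vx r (cw t) \<and> vw (Suc t) \<in> vset vx r (cw t)"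
    "\<forall>t<m. cw' t \<in> E" "\<forall>t<m. vw' t \<in> vset vx r (cw' t) \<and> vw' (Suc t) \<in> vset vx r (cw' t)"
  using geodesic_step[OF geo(1)] geodesic_step[OF geo(2)] assms by auto

lemma short_cycle_if_factors_meet:
  assumes q: "q < first_meet" "cw q = cw' q" and apart: "\<forall>t<q. cw t \<noteq> cw' t"
  shows "\<not> no_short_cycle E vx r (4 * l + 4)"
proof -
  have ql: "q < l" using q(1) first_meet(2) by simp
  note step = geodesic_step[OF geo(1) ql] geodesic_step[OF geo(2) ql]
  note prefix = walk_prefix[OF less_imp_le[OF ql]]
  show ?thesis
  proof (rule short_cycle_of_two_paths[where X = "cw q"])
    show "distinct (map vw [0..<Suc q] @ map vw' [0..<Suc q])"
      using q(1) by (intro distinct_vertices) simp_all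
    show "distinct (map cw [0..<q] @ map cw' [0..<q] @ [cw q, b])"
    proof (rule distinct_factors)
      have "cw q \<noteq> cw t" "cw' q \<noteq> cw' t" if "t < q" for t
        using inj_onD[OF inj_factors(1), of q t] inj_onD[OF inj_factors(2), of q t] ql that by auto
      then show "cw q \<notin> cw ` {..<q} \<union> cw' ` {..<q}" using q(2) by auto
      show "cw q \<noteq> b" using root_not_on_geodesics(1) ql by blast
    qed (use apart ql in simp_all)
    show "vw' q \<in> vset vx r (cw q)" using step(7) q(2) by simp
    show "2 * (q + q + 2) < 4 * l + 4" using ql by simp
  qed (fact root(1) step(1,2) prefix root(3,4))+
qed

lemma short_cycle_if_factors_apart:
  assumes apart: "\<forall>t<first_meet. cw t \<noteq> cw' t"
  shows "\<not> no_short_cycle E vx r (4 * l + 4)"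
proof -
  define p where "p = first_meet - 1"
  have p: "first_meet = Suc p" "p < l" using first_meet(1,2) unfolding p_def by auto
  note step = geodesic_step[OF geo(2) p(2)]
  show ?thesis
  proof (rule short_cycle_of_two_paths[where X = "cw' p"])
    show "distinct (map vw [0..<Suc (Suc p)] @ map vw' [0..<Suc p])"
      using p(1) by (intro distinct_vertices) simp_all
    show "distinct (map cw [0..<Suc p] @ map cw' [0..<p] @ [cw' p, b])"
    proof (rule distinct_factors)
      have "cw' p \<noteq> cw t" if "t < Suc p" for t
        using geodesic_factor_level[OF geo, of t p] apart p that by auto
      moreover have "cw' p \<noteq> cw' t" if "t < p" for t
        using inj_onD[OF inj_factors(2), of p t] p(2) that by auto
      ultimately show "cw' p \<notin> cw ` {..<Suc p} \<union> cw' ` {..<p}" by auto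
      show "cw' p \<noteq> b" using root_not_on_geodesics(2) p(2) by blast
    qed (use apart p in simp_all)
    show "vw (Suc p) \<in> vset vx r (cw' p)" using step(3) first_meet(3) p(1) by simp
    show "2 * (Suc p + p + 2) < 4 * l + 4" using p(2) by simp
  qed (fact root(1) step(1,2) walk_prefix[OF Suc_leI[OF p(2)]] walk_prefix[OF less_imp_le[OF p(2)]]
      root(3,4))+
qed

lemma short_cycle: "\<not> no_short_cycle E vx r (4 * l + 4)"
proof (cases "\<exists>t. t < first_meet \<and> cw t = cw' t")
  case True
  define q where "q = (LEAST t. t < first_meet \<and> cw t = cw' t)"
  have q: "q < first_meet \<and> cw q = cw' q"
    unfolding q_def by (rule LeastI_ex[OF True])
  have "cw t \<noteq> cw' t" if "t < q" for t
    using not_less_Least[OF that[unfolded q_def]] that q by simp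
  with q show ?thesis by (intro short_cycle_if_factors_meet) auto
next
  case False
  then show ?thesis by (intro short_cycle_if_factors_apart) blast
qed

end

lemma msg_deps_overlap_in_ball:
  assumes b: "b \<in> E" "i \<in> vset vx r b" "j \<in> vset vx r b" "j' \<in> vset vx r b" "j \<noteq> j'"
    and girth: "no_short_cycle E vx r (4 * l + 4)"
    and k: "k \<in> msg_deps E vx r l j b" "k \<in> msg_deps E vx r l j' b"
  shows "reachable_within E vx r i l k"
proof (rule ccontr)
  assume far: "\<not> reachable_within E vx r i l k"
  obtain n vw cw where w: "n \<le> l" "vw 0 = j" "vw n = k" "is_walk E vx r vw cw n"
    using msg_deps_walk[OF k(1)] by blast
  obtain n' vw' cw' where w': "n' \<le> l" "vw' 0 = j'" "vw' n' = k" "is_walk E vx r vw' cw' n'"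
    using msg_deps_walk[OF k(2)] by blast
  have "n = l" "geodesic E vx r i vw cw n"
    using walk_leaving_ball_is_geodesic[OF b(1,2) _ w(4,1)] w(2,3) b(3) far by simp_all
  moreover have "n' = l" "geodesic E vx r i vw' cw' n'"
    using walk_leaving_ball_is_geodesic[OF b(1,2) _ w'(4,1)] w'(2,3) b(4) far by simp_all
  ultimately interpret geodesic_pair E vx r i b l vw vw' cw cw'
    using b w(2,3) w'(2,3) by unfold_locales simp_all
  show False using short_cycle girth by simp
qed

lemma msg_deps_disjoint_outside_ball:
  assumes b: "b \<in> E" "i \<in> vset vx r b" and V: "\<forall>a\<in>E. vset vx r a \<subseteq> V"
    and girth: "no_short_cycle E vx r (4 * l + 4)"
  shows "disjoint_family_on (\<lambda>j. msg_deps E vx r l j b - vball V E vx r i l) (vset vx r b - {i})"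
  unfolding disjoint_family_on_def
proof (intro ballI impI)
  fix j j' assume j: "j \<in> vset vx r b - {i}" "j' \<in> vset vx r b - {i}" "j \<noteq> j'"
  have "k \<in> vball V E vx r i l" if "k \<in> msg_deps E vx r l j b" "k \<in> msg_deps E vx r l j' b" for k
    using msg_deps_overlap_in_ball[OF b _ _ j(3) girth that] j msg_deps_subset[OF V] that
    unfolding vball_eq by blast
  then show "(msg_deps E vx r l j b - vball V E vx r i l) \<inter> (msg_deps E vx r l j' b - vball V E vx r i l) = {}"
    by blast
qed

section \<open>Locality of the messages\<close>

lemma mlderiv_cong:
  assumes "\<And>\<iota>. \<iota> < r \<Longrightarrow> \<iota> \<noteq> p \<Longrightarrow> x \<iota> = y \<iota>"
  shows "mlderiv r f p x = mlderiv r f p y"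
  unfolding mlderiv_def
proof (intro sum.cong refl arg_cong2[where f = "(*)"] prod.cong)
  show "x \<kappa> = y \<kappa>" if "S \<in> {S \<in> Pow {..<r}. p \<in> S}" "\<kappa> \<in> S - {p}" for S \<kappa>
    using assms that by auto
qed

lemma z_of_cong:
  assumes "\<And>s. s \<le> l \<Longrightarrow> h s k c = h' s k c" "z0 k = z0' k"
  shows "z_of z0 Fto h l k c = z_of z0' Fto h' l k c"
proof -
  have u: "u_of h s k c = u_of h' s k c" if "s \<le> l" for s
    using assms(1)[of s] assms(1)[of "s - 1"] that by (simp add: u_of_def)
  have "A_of Fto h (s - 1) k c = A_of Fto h' (s - 1) k c" if "s \<le> l" for s
    unfolding A_of_def using u that by (intro arg_cong[where f = "Fto (s - 1)"] restrict_ext) auto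
  then show ?thesis unfolding z_of_def using u assms(2) by (intro arg_cong2[where f = "(+)"] sum.cong) auto
qed

lemma pos_vx:
  assumes "inj_on (vx c) {..<r}" "\<iota> < r"
  shows "pos vx r c (vx c \<iota>) = \<iota>"
  unfolding pos_def using assms by (intro the_equality) (auto simp: inj_on_def)

lemma whist_local:
  assumes inj: "\<forall>a\<in>E. inj_on (vx a) {..<r}"
    and agree: "\<forall>v\<in>msg_deps E vx r l j a. \<omega> v = \<omega>' v" and "s \<le> l"
  shows "whist r E vx d f Fto \<omega> l s j a = whist r E vx d f Fto \<omega>' l s j a"
  using agree \<open>s \<le> l\<close>
proof (induction l arbitrary: j a s)
  case (Suc l)
  let ?h = "whist r E vx d f Fto \<omega> l" and ?h' = "whist r E vx d f Fto \<omega>' l"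
  show ?case
  proof (cases "s \<le> l")
    case True
    then show ?thesis using Suc.IH[of j a s] Suc.prems by (simp add: Let_def)
  next
    case False
    have "mlderiv r (\<lambda>x. f x) (pos vx r c j) (\<lambda>\<iota>. z_of \<omega> Fto ?h l (vx c \<iota>) c)
       = mlderiv r (\<lambda>x. f x) (pos vx r c j) (\<lambda>\<iota>. z_of \<omega>' Fto ?h' l (vx c \<iota>) c)"
      if c: "c \<in> fdeg E vx r j - {a}" for c
    proof (rule mlderiv_cong)
      fix \<iota> assume \<iota>: "\<iota> < r" "\<iota> \<noteq> pos vx r c j"
      have "c \<in> E" using c unfolding fdeg_def by auto
      then have "vx c \<iota> \<noteq> j" using pos_vx[of vx c r \<iota>, OF inj[rule_format, OF \<open>c \<in> E\<close>] \<iota>(1)] \<iota>(2) by auto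
      then have "vx c \<iota> \<in> vset vx r c - {j}" using \<iota>(1) unfolding vset_def by auto
      then have "insert (vx c \<iota>) (msg_deps E vx r l (vx c \<iota>) c) \<subseteq> msg_deps E vx r (Suc l) j a"
        using c by auto
      then have "\<forall>v\<in>msg_deps E vx r l (vx c \<iota>) c. \<omega> v = \<omega>' v" "\<omega> (vx c \<iota>) = \<omega>' (vx c \<iota>)"
        using Suc.prems(1) by auto
      then show "z_of \<omega> Fto ?h l (vx c \<iota>) c = z_of \<omega>' Fto ?h' l (vx c \<iota>) c"
        using Suc.IH by (intro z_of_cong) auto
    qed
    then show ?thesis using False by (simp add: Let_def)
  qed
qed simp

lemma umsg_local:
  assumes "\<forall>a\<in>E. inj_on (vx a) {..<r}" "\<forall>v\<in>msg_deps E vx r l j b. \<omega> v = \<omega>' v"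
  shows "umsg r E vx d f Fto \<omega> l j b = umsg r E vx d f Fto \<omega>' l j b"
  unfolding umsg_def u_of_def using whist_local[OF assms] by simp

section \<open>Polynomial growth of the messages\<close>

definition coord_weight :: "'v set \<Rightarrow> ('v \<Rightarrow> real) \<Rightarrow> real" where
  "coord_weight V \<omega> = 1 + (\<Sum>v\<in>V. \<bar>\<omega> v\<bar>)"

definition poly_bounded :: "'v set \<Rightarrow> (('v \<Rightarrow> real) \<Rightarrow> real) \<Rightarrow> bool" where
  "poly_bounded V g \<longleftrightarrow> (\<exists>C q. \<forall>\<omega>. \<bar>g \<omega>\<bar> \<le> C * coord_weight V \<omega> ^ q)"

lemma coord_weight_ge_1: "1 \<le> coord_weight V \<omega>"
  unfolding coord_weight_def by (simp add: sum_nonneg)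

lemma abs_le_coord_weight: "finite V \<Longrightarrow> v \<in> V \<Longrightarrow> \<bar>\<omega> v\<bar> \<le> coord_weight V \<omega>"
  unfolding coord_weight_def using member_le_sum[of v V "\<lambda>v. \<bar>\<omega> v\<bar>"] by simp

lemma poly_bounded_const: "poly_bounded V (\<lambda>_. c)"
  unfolding poly_bounded_def by (intro exI[of _ "\<bar>c\<bar>"] exI[of _ 0]) simp

lemma poly_bounded_mult:
  assumes "poly_bounded V g" "poly_bounded V h"
  shows "poly_bounded V (\<lambda>\<omega>. g \<omega> * h \<omega>)"
proof -
  obtain C q C' q' where g: "\<And>\<omega>. \<bar>g \<omega>\<bar> \<le> C * coord_weight V \<omega> ^ q"
    and h: "\<And>\<omega>. \<bar>h \<omega>\<bar> \<le> C' * coord_weight V \<omega> ^ q'"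
    using assms unfolding poly_bounded_def by blast
  have "\<bar>g \<omega> * h \<omega>\<bar> \<le> (C * C') * coord_weight V \<omega> ^ (q + q')" for \<omega>
  proof -
    have "\<bar>g \<omega> * h \<omega>\<bar> \<le> (C * coord_weight V \<omega> ^ q) * (C' * coord_weight V \<omega> ^ q')"
      unfolding abs_mult using g h by (intro mult_mono) (auto intro: order_trans[OF abs_ge_zero])
    then show ?thesis by (simp add: power_add ac_simps)
  qed
  then show ?thesis unfolding poly_bounded_def by blast
qed

lemma poly_bounded_prod:
  "(\<And>j. j \<in> J \<Longrightarrow> poly_bounded V (X j)) \<Longrightarrow> poly_bounded V (\<lambda>\<omega>. \<Prod>j\<in>J. X j \<omega>)"
proof (induction J rule: infinite_finite_induct)
  case (insert j J)
  then show ?case by (simp add: poly_bounded_mult)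
qed (simp_all add: poly_bounded_const)

lemma poly_bounded_power: "poly_bounded V g \<Longrightarrow> poly_bounded V (\<lambda>\<omega>. g \<omega> ^ n)"
  using poly_bounded_prod[of "{..<n}" V "\<lambda>_. g"] by simp

lemma poly_bounded_diff:
  assumes "poly_bounded V g" "poly_bounded V h"
  shows "poly_bounded V (\<lambda>\<omega>. g \<omega> - h \<omega>)"
proof -
  obtain C q C' q' where g: "\<And>\<omega>. \<bar>g \<omega>\<bar> \<le> C * coord_weight V \<omega> ^ q"
    and h: "\<And>\<omega>. \<bar>h \<omega>\<bar> \<le> C' * coord_weight V \<omega> ^ q'"
    using assms unfolding poly_bounded_def by blast
  have "\<bar>g \<omega> - h \<omega>\<bar> \<le> (\<bar>C\<bar> + \<bar>C'\<bar>) * coord_weight V \<omega> ^ max q q'" for \<omega>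
  proof -
    have w: "0 \<le> coord_weight V \<omega> ^ q" "coord_weight V \<omega> ^ q \<le> coord_weight V \<omega> ^ max q q'"
      "0 \<le> coord_weight V \<omega> ^ q'" "coord_weight V \<omega> ^ q' \<le> coord_weight V \<omega> ^ max q q'"
      using coord_weight_ge_1[of V \<omega>] by (auto intro: power_increasing)
    have "C * coord_weight V \<omega> ^ q \<le> \<bar>C\<bar> * coord_weight V \<omega> ^ max q q'"
      "C' * coord_weight V \<omega> ^ q' \<le> \<bar>C'\<bar> * coord_weight V \<omega> ^ max q q'"
      using w by (auto intro!: mult_mono)
    moreover have "\<bar>g \<omega> - h \<omega>\<bar> \<le> \<bar>g \<omega>\<bar> + \<bar>h \<omega>\<bar>" by (rule abs_triangle_ineq4)
    ultimately show ?thesis using g[of \<omega>] h[of \<omega>] by (simp add: distrib_right)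
  qed
  then show ?thesis unfolding poly_bounded_def by blast
qed

definition fourier_l1 :: "nat \<Rightarrow> ((nat \<Rightarrow> real) \<Rightarrow> real) \<Rightarrow> real" where
  "fourier_l1 r f = (\<Sum>S\<in>Pow {..<r}. \<bar>fourier r f S\<bar>)"

lemma mlderiv_abs_le:
  assumes Z: "1 \<le> Z" and x: "\<forall>\<kappa><r. \<bar>x \<kappa>\<bar> \<le> Z"
  shows "\<bar>mlderiv r f p x\<bar> \<le> fourier_l1 r f * Z ^ r"
proof -
  have term_le: "\<bar>fourier r f S * (\<Prod>\<kappa>\<in>S - {p}. x \<kappa>)\<bar> \<le> \<bar>fourier r f S\<bar> * Z ^ r"
    if S: "S \<subseteq> {..<r}" for S
  proof -
    have "\<bar>\<Prod>\<kappa>\<in>S - {p}. x \<kappa>\<bar> \<le> (\<Prod>\<kappa>\<in>S - {p}. Z)"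
      unfolding abs_prod using x S by (intro prod_mono) auto
    also have "\<dots> = Z ^ card (S - {p})" by simp
    also have "\<dots> \<le> Z ^ r"
      using card_mono[of "{..<r}" "S - {p}"] S by (intro power_increasing[OF _ Z]) auto
    finally show ?thesis by (simp add: abs_mult mult_left_mono)
  qed
  have "\<bar>mlderiv r f p x\<bar> \<le> (\<Sum>S\<in>{S \<in> Pow {..<r}. p \<in> S}. \<bar>fourier r f S\<bar> * Z ^ r)"
    unfolding mlderiv_def using term_le by (intro order_trans[OF sum_abs] sum_mono) auto
  also have "\<dots> \<le> (\<Sum>S\<in>Pow {..<r}. \<bar>fourier r f S\<bar> * Z ^ r)"
    using Z by (intro sum_mono2) auto
  finally show ?thesis unfolding fourier_l1_def by (simp add: sum_distrib_right)
qed

lemma z_of_abs_le: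
  assumes "\<forall>k<l. \<forall>y. \<bar>Fto k y\<bar> \<le> K" "\<forall>s. \<bar>u_of h s k c\<bar> \<le> U"
  shows "\<bar>z_of z0 Fto h l k c\<bar> \<le> \<bar>z0 k\<bar> + real l * (K * U)"
proof -
  have bound: "\<bar>A_of Fto h (s - 1) k c * u_of h s k c\<bar> \<le> K * U" if "s \<in> {1..l}" for s
    unfolding abs_mult A_of_def using assms that
    by (intro mult_mono) (auto intro: order_trans[OF abs_ge_zero])
  have "\<bar>\<Sum>s\<in>{1..l}. A_of Fto h (s - 1) k c * u_of h s k c\<bar>
      \<le> (\<Sum>s\<in>{1..l}. \<bar>A_of Fto h (s - 1) k c * u_of h s k c\<bar>)"
    by (rule sum_abs)
  also have "\<dots> \<le> (\<Sum>s\<in>{1..l}. K * U)" by (rule sum_mono) (rule bound)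
  also have "\<dots> = real l * (K * U)" by simp
  finally have "\<bar>\<Sum>s\<in>{1..l}. A_of Fto h (s - 1) k c * u_of h s k c\<bar> \<le> real l * (K * U)" .
  then show ?thesis unfolding z_of_def using abs_triangle_ineq order_trans add_left_mono by blast
qed

lemma z_of_whist_abs_le:
  assumes Fto: "\<forall>k<l. \<forall>y. \<bar>Fto k y\<bar> \<le> K" and V: "finite V" "k \<in> V"
    and W: "\<forall>s j a. \<bar>whist r E vx d f Fto \<omega> l s j a\<bar> \<le> W"
  shows "\<bar>z_of \<omega> Fto (whist r E vx d f Fto \<omega> l) l k c\<bar> \<le> coord_weight V \<omega> + real l * (K * (2 * W))"
proof -
  have "\<forall>s. \<bar>u_of (whist r E vx d f Fto \<omega> l) s k c\<bar> \<le> 2 * W"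
  proof
    fix s
    show "\<bar>u_of (whist r E vx d f Fto \<omega> l) s k c\<bar> \<le> 2 * W"
      using W[rule_format, of s k c] W[rule_format, of "s - 1" k c] unfolding u_of_def by linarith
  qed
  from z_of_abs_le[OF Fto this, of \<omega>] abs_le_coord_weight[OF V, of \<omega>] show ?thesis by linarith
qed

lemma whist_Suc_abs_le:
  fixes vx :: "'a \<Rightarrow> nat \<Rightarrow> 'v"
  assumes Fto: "\<forall>k<l. \<forall>y. \<bar>Fto k y\<bar> \<le> K" and K: "0 \<le> K"
    and E: "finite E" "\<forall>a\<in>E. vset vx r a \<subseteq> V" and V: "finite V"
    and W: "\<forall>s j a. \<bar>whist r E vx d f Fto \<omega> l s j a\<bar> \<le> W"
  shows "\<bar>whist r E vx d f Fto \<omega> (Suc l) s j a\<bar> \<le> max W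
     (\<bar>1 / sqrt (real d - 1)\<bar> * real (card E) * fourier_l1 r f *
       (coord_weight V \<omega> + real l * (K * (2 * W))) ^ r)"
proof (cases "s \<le> l")
  case True
  then show ?thesis using W by (simp add: Let_def le_max_iff_disj)
next
  case False
  define Z where "Z = coord_weight V \<omega> + real l * (K * (2 * W))"
  have "0 \<le> W" using W order_trans[OF abs_ge_zero] by blast
  then have "0 \<le> real l * (K * (2 * W))" using K by simp
  then have Z: "1 \<le> Z" unfolding Z_def using coord_weight_ge_1[of V \<omega>] by linarith
  let ?m = "\<lambda>c. mlderiv r (\<lambda>x. f x) (pos vx r c j)
    (\<lambda>\<iota>. z_of \<omega> Fto (whist r E vx d f Fto \<omega> l) l (vx c \<iota>) c)"
  have "\<bar>?m c\<bar> \<le> fourier_l1 r f * Z ^ r" if "c \<in> fdeg E vx r j - {a}" for c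
  proof (rule mlderiv_abs_le[OF Z], intro allI impI)
    fix \<iota> assume "\<iota> < r"
    then have "vx c \<iota> \<in> V" using that E(2) unfolding fdeg_def vset_def by auto
    then show "\<bar>z_of \<omega> Fto (whist r E vx d f Fto \<omega> l) l (vx c \<iota>) c\<bar> \<le> Z"
      unfolding Z_def by (rule z_of_whist_abs_le[OF Fto V _ W])
  qed
  then have "\<bar>\<Sum>c\<in>fdeg E vx r j - {a}. ?m c\<bar> \<le> real (card (fdeg E vx r j - {a})) * (fourier_l1 r f * Z ^ r)"
    by (intro order_trans[OF sum_abs] sum_bounded_above) auto
  also have "\<dots> \<le> real (card E) * (fourier_l1 r f * Z ^ r)"
    using Z E(1) card_mono[OF E(1), of "fdeg E vx r j - {a}"]
    by (intro mult_right_mono) (auto simp: fdeg_def fourier_l1_def sum_nonneg)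
  finally have "\<bar>whist r E vx d f Fto \<omega> (Suc l) s j a\<bar>
      \<le> \<bar>1 / sqrt (real d - 1)\<bar> * (real (card E) * (fourier_l1 r f * Z ^ r))"
    using False by (simp add: Let_def abs_mult divide_right_mono)
  then show ?thesis unfolding Z_def by (simp add: le_max_iff_disj ac_simps)
qed

lemma weight_power_le:
  fixes w a :: real
  assumes w: "1 \<le> w" and a: "0 \<le> a"
  shows "(w + a * w ^ e) ^ r \<le> (1 + a) ^ r * w ^ (e + Suc e * r)"
proof -
  have "w \<le> w ^ Suc e" "w ^ e \<le> w ^ Suc e"
    using power_increasing[OF _ w, of 1 "Suc e"] power_increasing[OF _ w, of e "Suc e"] by simp_all
  then have "w + a * w ^ e \<le> w ^ Suc e + a * w ^ Suc e"
    using a by (intro add_mono mult_left_mono)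
  then have "w + a * w ^ e \<le> (1 + a) * w ^ Suc e" by (simp add: distrib_right)
  then have "(w + a * w ^ e) ^ r \<le> ((1 + a) * w ^ Suc e) ^ r"
    using w a by (intro power_mono) simp_all
  also have "\<dots> = (1 + a) ^ r * w ^ (Suc e * r)" by (simp only: power_mult_distrib power_mult)
  also have "\<dots> \<le> (1 + a) ^ r * w ^ (e + Suc e * r)"
    using w a by (intro mult_left_mono power_increasing) simp_all
  finally show ?thesis .
qed

lemma whist_poly_bound:
  fixes vx :: "'a \<Rightarrow> nat \<Rightarrow> 'v"
  assumes Fto: "\<forall>k<L. \<forall>y. \<bar>Fto k y\<bar> \<le> K" and K: "0 \<le> K"
    and E: "finite E" "\<forall>a\<in>E. vset vx r a \<subseteq> V" and V: "finite V" and "l \<le> L"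
  shows "\<exists>C e. 0 \<le> C \<and> (\<forall>\<omega> s j a. \<bar>whist r E vx d f Fto \<omega> l s j a\<bar> \<le> C * coord_weight V \<omega> ^ e)"
  using \<open>l \<le> L\<close>
proof (induction l)
  case 0
  show ?case by (intro exI[of _ 0]) simp
next
  case (Suc l)
  then obtain C e where C: "0 \<le> C"
    and IH: "\<And>\<omega> s j a. \<bar>whist r E vx d f Fto \<omega> l s j a\<bar> \<le> C * coord_weight V \<omega> ^ e"
    by auto
  have Fto_l: "\<forall>k<l. \<forall>y. \<bar>Fto k y\<bar> \<le> K" using Fto Suc.prems by simp
  define c0 where "c0 = \<bar>1 / sqrt (real d - 1)\<bar> * real (card E) * fourier_l1 r f"
  define c1 where "c1 = 1 + real l * (K * (2 * C))"
  have c0: "0 \<le> c0" unfolding c0_def fourier_l1_def by (simp add: sum_nonneg)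
  have c1: "0 \<le> c1" unfolding c1_def using K C by simp
  show ?case
  proof (intro exI[of _ "C + c0 * c1 ^ r"] exI[of _ "e + Suc e * r"] conjI allI)
    show "0 \<le> C + c0 * c1 ^ r" using C c0 c1 by simp
    fix \<omega> s j a
    let ?w = "coord_weight V \<omega>"
    have w: "1 \<le> ?w" by (rule coord_weight_ge_1)
    have "c0 * (?w + real l * (K * (2 * (C * ?w ^ e)))) ^ r \<le> c0 * (c1 ^ r * ?w ^ (e + Suc e * r))"
      using weight_power_le[OF w, of "real l * (K * (2 * C))" e r] c0 K C
      unfolding c1_def by (intro mult_left_mono) (simp_all add: ac_simps)
    moreover have "C * ?w ^ e \<le> C * ?w ^ (e + Suc e * r)"
      using C w by (intro mult_left_mono power_increasing) auto
    moreover have "\<bar>whist r E vx d f Fto \<omega> (Suc l) s j a\<bar>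
        \<le> max (C * ?w ^ e) (c0 * (?w + real l * (K * (2 * (C * ?w ^ e)))) ^ r)"
      using whist_Suc_abs_le[OF Fto_l K E V, of d f \<omega> "C * ?w ^ e"] IH unfolding c0_def by simp
    moreover have "0 \<le> C * ?w ^ (e + Suc e * r)" "0 \<le> c0 * (c1 ^ r * ?w ^ (e + Suc e * r))"
      using C c0 c1 w by simp_all
    ultimately have "\<bar>whist r E vx d f Fto \<omega> (Suc l) s j a\<bar>
        \<le> C * ?w ^ (e + Suc e * r) + c0 * (c1 ^ r * ?w ^ (e + Suc e * r))"
      by (smt (verit) max.bounded_iff)
    then show "\<bar>whist r E vx d f Fto \<omega> (Suc l) s j a\<bar> \<le> (C + c0 * c1 ^ r) * ?w ^ (e + Suc e * r)"
      by (simp add: algebra_simps)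
  qed
qed

lemma umsg_poly_bounded:
  fixes vx :: "'a \<Rightarrow> nat \<Rightarrow> 'v"
  assumes "\<forall>k<L. \<forall>y. \<bar>Fto k y\<bar> \<le> K" "0 \<le> K"
    and "finite E" "\<forall>a\<in>E. vset vx r a \<subseteq> V" "finite V" "l \<le> L"
  shows "poly_bounded V (\<lambda>\<omega>. umsg r E vx d f Fto \<omega> l j b)"
proof -
  have "poly_bounded V (\<lambda>\<omega>. whist r E vx d f Fto \<omega> l s j b)" for s
    using whist_poly_bound[OF assms] unfolding poly_bounded_def by blast
  then show ?thesis unfolding umsg_def u_of_def by (intro poly_bounded_diff)
qed

section \<open>Measurability and integrability\<close>

lemma whist_measurable:
  assumes coord: "\<And>v. (\<lambda>\<omega>. \<omega> v) \<in> borel_measurable M"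
    and Fto: "\<forall>k<L. Fto k \<in> borel_measurable (\<Pi>\<^sub>M \<kappa>\<in>{..<k}. borel)" and "l \<le> L"
  shows "(\<lambda>\<omega>. whist r E vx d f Fto \<omega> l s j a) \<in> borel_measurable M"
  using \<open>l \<le> L\<close>
proof (induction l arbitrary: s j a)
  case (Suc l)
  let ?h = "\<lambda>\<omega>. whist r E vx d f Fto \<omega> l"
  have h: "(\<lambda>\<omega>. ?h \<omega> s j a) \<in> borel_measurable M" for s j a
    using Suc by simp
  then have u: "(\<lambda>\<omega>. u_of (?h \<omega>) t k c) \<in> borel_measurable M" for t k c
    unfolding u_of_def by measurable
  have "(\<lambda>\<omega>. A_of Fto (?h \<omega>) (t - 1) k c) \<in> borel_measurable M" if "t \<in> {1..l}" for t k c
  proof -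
    have "(\<lambda>\<omega>. restrict (\<lambda>m. u_of (?h \<omega>) (m + 1) k c) {..<t - 1}) \<in> measurable M (\<Pi>\<^sub>M \<kappa>\<in>{..<t - 1}. borel)"
      using u by (rule measurable_restrict)
    moreover have "t - 1 < L" using that Suc.prems by auto
    ultimately show ?thesis
      unfolding A_of_def using Fto measurable_compose by blast
  qed
  then have "(\<lambda>\<omega>. z_of \<omega> Fto (?h \<omega>) l k c) \<in> borel_measurable M" for k c
    unfolding z_of_def using coord u by measurable
  then have "(\<lambda>\<omega>. mlderiv r f p (\<lambda>\<iota>. z_of \<omega> Fto (?h \<omega>) l (vx c \<iota>) c)) \<in> borel_measurable M" for p c
    unfolding mlderiv_def by measurable
  with h show ?case by (simp add: Let_def)
qed simp

lemma one_plus_sum_le_prod: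
  fixes a :: "'x \<Rightarrow> real"
  assumes "\<And>v. v \<in> S \<Longrightarrow> 0 \<le> a v"
  shows "1 + (\<Sum>v\<in>S. a v) \<le> (\<Prod>v\<in>S. 1 + a v)"
  using assms
proof (induction S rule: infinite_finite_induct)
  case (insert x S)
  have "1 \<le> (\<Prod>v\<in>S. 1 + a v)" using insert by (intro prod_ge_1) auto
  then have "a x \<le> a x * (\<Prod>v\<in>S. 1 + a v)" using insert mult_left_mono by fastforce
  then show ?case using insert by (simp add: algebra_simps)
qed simp_all

lemma integrable_normal_density_moments:
  assumes \<sigma>: "0 < \<sigma>"
  shows "integrable (density lborel (normal_density 0 \<sigma>)) (\<lambda>t. (1 + \<bar>t\<bar>) ^ q)"
proof -
  have "integrable lborel (\<lambda>x. 2 ^ q * (normal_density 0 \<sigma> x + normal_density 0 \<sigma> x * \<bar>x\<bar> ^ q))"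
    using integrable_normal_moment_abs[OF \<sigma>, of 0 q] integrable_normal_density[OF \<sigma>] by simp
  then have "integrable lborel (\<lambda>x. normal_density 0 \<sigma> x *\<^sub>R (1 + \<bar>x\<bar>) ^ q)"
  proof (rule Bochner_Integration.integrable_bound, measurable, intro AE_I2)
    fix x :: real
    have "(1 + \<bar>x\<bar>) ^ q \<le> (2 * max 1 \<bar>x\<bar>) ^ q" by (intro power_mono) auto
    also have "\<dots> \<le> 2 ^ q * (1 + \<bar>x\<bar> ^ q)"
      by (cases "\<bar>x\<bar> \<le> 1") (auto simp: power_mult_distrib max_def)
    finally have "normal_density 0 \<sigma> x * (1 + \<bar>x\<bar>) ^ q \<le> normal_density 0 \<sigma> x * (2 ^ q * (1 + \<bar>x\<bar> ^ q))"
      by (simp add: mult_left_mono)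
    then show "norm (normal_density 0 \<sigma> x *\<^sub>R (1 + \<bar>x\<bar>) ^ q)
        \<le> norm (2 ^ q * (normal_density 0 \<sigma> x + normal_density 0 \<sigma> x * \<bar>x\<bar> ^ q))"
      by (simp add: algebra_simps abs_mult)
  qed
  then show ?thesis by (subst integrable_density) auto
qed

locale real_product_space =
  fixes N :: "real measure" and V :: "'v set"
  assumes prob_N: "prob_space N" and sets_N: "sets N = sets borel" and finite_V: "finite V"
begin

abbreviation "M \<equiv> \<Pi>\<^sub>M v\<in>V. N"

lemma space_N: "space N = UNIV"
  using sets_eq_imp_space_eq[OF sets_N] by simp

lemma measurable_N_borel: "measurable X N = measurable X borel"
  by (rule measurable_cong_sets) (auto simp: sets_N)

lemma prob_space_product: "prob_space (\<Pi>\<^sub>M v\<in>I. N)"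
  by (rule prob_space_PiM) (rule prob_N)

lemma product_prob_space_N: "product_prob_space (\<lambda>_::'v. N)"
  unfolding product_prob_space_def product_prob_space_axioms_def product_sigma_finite_def
  using prob_N by (simp add: prob_space_imp_sigma_finite)

lemma coordinate_measurable: "(\<lambda>y. y v) \<in> measurable (\<Pi>\<^sub>M u\<in>I. N) N"
proof (cases "v \<in> I")
  case False
  then have "\<And>y. y \<in> space (\<Pi>\<^sub>M v\<in>I. N) \<Longrightarrow> y v = undefined"
    by (auto simp: space_PiM PiE_def extensional_def)
  then show ?thesis by (subst measurable_cong[where g = "\<lambda>_. undefined"]) (auto simp: space_N)
qed (rule measurable_component_singleton)

lemma coordinate_borel_measurable: "(\<lambda>\<omega>. \<omega> v) \<in> borel_measurable M"
  using coordinate_measurable[of v V] measurable_N_borel[of M] by simp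

lemma integrable_poly_bounded:
  assumes moments: "\<And>q. integrable N (\<lambda>t. (1 + \<bar>t\<bar>) ^ q)"
    and g: "g \<in> borel_measurable M" "poly_bounded V g"
  shows "integrable M g"
proof -
  interpret product_prob_space "\<lambda>_::'v. N" V by (rule product_prob_space_N)
  obtain C q where bound: "\<And>\<omega>. \<bar>g \<omega>\<bar> \<le> C * coord_weight V \<omega> ^ q"
    using g(2) unfolding poly_bounded_def by blast
  have "integrable M (\<lambda>\<omega>. \<Prod>v\<in>V. (1 + \<bar>\<omega> v\<bar>) ^ q)"
    using product_integrable_prod[OF finite_V, of "\<lambda>_ t. (1 + \<bar>t\<bar>) ^ q"] moments by simp
  then have "integrable M (\<lambda>\<omega>. C * (\<Prod>v\<in>V. (1 + \<bar>\<omega> v\<bar>) ^ q))" by simp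
  then show ?thesis
  proof (rule Bochner_Integration.integrable_bound[OF _ g(1)], intro AE_I2)
    fix \<omega>
    have "coord_weight V \<omega> ^ q \<le> (\<Prod>v\<in>V. 1 + \<bar>\<omega> v\<bar>) ^ q"
      unfolding coord_weight_def by (intro power_mono one_plus_sum_le_prod) (auto simp: sum_nonneg)
    then have "C * coord_weight V \<omega> ^ q \<le> \<bar>C\<bar> * (\<Prod>v\<in>V. (1 + \<bar>\<omega> v\<bar>) ^ q)"
      using coord_weight_ge_1[of V \<omega>]
      by (simp add: prod_power_distrib[symmetric]) (smt (verit) mult_mono zero_le_power)
    with bound[of \<omega>] show "norm (g \<omega>) \<le> norm (C * (\<Prod>v\<in>V. (1 + \<bar>\<omega> v\<bar>) ^ q))"
      by (simp add: abs_mult prod_nonneg)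
  qed
qed

lemma integrable_umsg_power_prod:
  fixes vx :: "'a \<Rightarrow> nat \<Rightarrow> 'v"
  assumes moments: "\<And>q. integrable N (\<lambda>t. (1 + \<bar>t\<bar>) ^ q)"
    and Fto: "\<forall>k<L. \<forall>y. \<bar>Fto k y\<bar> \<le> K" "\<forall>k<L. Fto k \<in> borel_measurable (\<Pi>\<^sub>M \<kappa>\<in>{..<k}. borel)"
    and K: "0 \<le> K" and E: "finite E" "\<forall>a\<in>E. vset vx r a \<subseteq> V" and l: "l \<le> L"
  shows "integrable M (\<lambda>\<omega>. \<Prod>j\<in>J. umsg r E vx d f Fto \<omega> l j b ^ s j)"
proof (rule integrable_poly_bounded[OF moments])
  have "(\<lambda>\<omega>. umsg r E vx d f Fto \<omega> l j b) \<in> borel_measurable M" for j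
    using whist_measurable[OF coordinate_borel_measurable Fto(2) l]
    unfolding umsg_def u_of_def by measurable
  then show "(\<lambda>\<omega>. \<Prod>j\<in>J. umsg r E vx d f Fto \<omega> l j b ^ s j) \<in> borel_measurable M"
    by measurable
  show "poly_bounded V (\<lambda>\<omega>. \<Prod>j\<in>J. umsg r E vx d f Fto \<omega> l j b ^ s j)"
    using umsg_poly_bounded[OF Fto(1) K E finite_V l] by (intro poly_bounded_prod poly_bounded_power)
qed

lemma indep_coordinates:
  "prob_space.indep_vars (\<Pi>\<^sub>M u\<in>I. N) (\<lambda>_. N) (\<lambda>v y. y v) I"
proof -
  interpret P: prob_space "\<Pi>\<^sub>M u\<in>I. N" by (rule prob_space_product)
  show ?thesis
  proof (cases "I = {}")
    case True
    then show ?thesis unfolding P.indep_vars_def P.indep_sets_def by simp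
  next
    case False
    have "distr (\<Pi>\<^sub>M u\<in>I. N) (\<Pi>\<^sub>M u\<in>I. N) (\<lambda>y. \<lambda>v\<in>I. y v)
        = distr (\<Pi>\<^sub>M u\<in>I. N) (\<Pi>\<^sub>M u\<in>I. N) (\<lambda>y. y)"
      by (rule distr_cong) (auto simp: space_PiM PiE_def extensional_def restrict_def fun_eq_iff)
    moreover have "(\<Pi>\<^sub>M v\<in>I. distr (\<Pi>\<^sub>M u\<in>I. N) N (\<lambda>y. y v)) = (\<Pi>\<^sub>M u\<in>I. N)"
      by (rule PiM_cong) (auto intro!: distr_PiM_component prob_N)
    ultimately show ?thesis
      using P.indep_vars_iff_distr_eq_PiM[OF False coordinate_measurable] by simp
  qed
qed

end

section \<open>Conditioning on a set of coordinates\<close>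

lemma space_gen_sigma: "space (gen_sigma M B) = space M"
  unfolding gen_sigma_def by (simp add: space_measure_of_conv)

lemma sets_gen_sigma:
  "sets (gen_sigma M B) =
     sigma_sets (space M) {(\<lambda>\<omega>. \<omega> j) -` A \<inter> space M | j A. j \<in> B \<and> A \<in> sets borel}"
  unfolding gen_sigma_def by (rule sets_measure_of) auto

lemma subalgebra_gen_sigma:
  assumes "\<And>j. j \<in> B \<Longrightarrow> (\<lambda>\<omega>. \<omega> j) \<in> borel_measurable M"
  shows "subalgebra M (gen_sigma M B)"
  unfolding subalgebra_def space_gen_sigma sets_gen_sigma
  using assms by (intro conjI refl sets.sigma_sets_subset) (auto intro: measurable_sets)

lemma gen_sigma_coordinate_measurable:
  "j \<in> B \<Longrightarrow> (\<lambda>\<omega>. \<omega> j) \<in> borel_measurable (gen_sigma M B)"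
  unfolding sets_gen_sigma space_gen_sigma measurable_def
  by (auto simp: space_gen_sigma sets_gen_sigma)

locale product_split = real_product_space N V for N :: "real measure" and V :: "'v set" +
  fixes B :: "'v set"
  assumes B_V: "B \<subseteq> V"
begin

abbreviation "G \<equiv> gen_sigma M B"
abbreviation "W \<equiv> V - B"

lemma subalgebra_G: "subalgebra M G"
  using coordinate_borel_measurable by (rule subalgebra_gen_sigma)

lemma restrict_measurable_G: "(\<lambda>\<omega>. restrict \<omega> B) \<in> measurable G (\<Pi>\<^sub>M v\<in>B. N)"
proof (rule measurable_restrict)
  show "(\<lambda>\<omega>. \<omega> j) \<in> measurable G N" if "j \<in> B" for j
    using gen_sigma_coordinate_measurable[OF that] measurable_N_borel[of G] by simp
qed

lemma restrict_measurable: "(\<lambda>\<omega>. restrict \<omega> B) \<in> measurable M (\<Pi>\<^sub>M v\<in>B. N)"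
  by (rule measurable_from_subalg[OF subalgebra_G restrict_measurable_G])

lemma sets_G_vimage_restrict:
  assumes "A \<in> sets G"
  shows "\<exists>A'\<in>sets (\<Pi>\<^sub>M v\<in>B. N). A = (\<lambda>\<omega>. restrict \<omega> B) -` A' \<inter> space M"
proof -
  let ?VA = "vimage_algebra (space M) (\<lambda>\<omega>. restrict \<omega> B) (\<Pi>\<^sub>M v\<in>B. N)"
  have restrict_space: "(\<lambda>\<omega>. restrict \<omega> B) \<in> space M \<rightarrow> space (\<Pi>\<^sub>M v\<in>B. N)"
    using measurable_space[OF restrict_measurable] by (rule funcsetI)
  have "(\<lambda>\<omega>. \<omega> j) -` A \<inter> space M \<in> sets ?VA" if "j \<in> B" "A \<in> sets borel" for j A
  proof -
    let ?A' = "{x \<in> space (\<Pi>\<^sub>M v\<in>B. N). x j \<in> A}"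
    have "(\<lambda>x. x j) \<in> borel_measurable (\<Pi>\<^sub>M v\<in>B. N)"
      using coordinate_measurable[of j B] measurable_N_borel[of "\<Pi>\<^sub>M v\<in>B. N"] by simp
    from measurable_sets[OF this that(2)] have "?A' \<in> sets (\<Pi>\<^sub>M v\<in>B. N)"
      by (simp add: vimage_def Int_def conj_commute)
    moreover have "(\<lambda>\<omega>. \<omega> j) -` A \<inter> space M = (\<lambda>\<omega>. restrict \<omega> B) -` ?A' \<inter> space M"
      using restrict_space that(1) by auto
    ultimately show ?thesis unfolding sets_vimage_algebra2[OF restrict_space] by blast
  qed
  then have "{(\<lambda>\<omega>. \<omega> j) -` A \<inter> space M | j A. j \<in> B \<and> A \<in> sets borel} \<subseteq> sets ?VA"
    by auto
  from sets.sigma_sets_subset[OF this] have "sets G \<subseteq> sets ?VA"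
    unfolding sets_gen_sigma by simp
  then show ?thesis using assms unfolding sets_vimage_algebra2[OF restrict_space] by auto
qed

lemma split_V: "B \<union> W = V" "B \<inter> W = {}" "finite B" "finite W"
  using B_V finite_V finite_subset by auto

lemma merge_measurable: "merge B W \<in> measurable ((\<Pi>\<^sub>M v\<in>B. N) \<Otimes>\<^sub>M (\<Pi>\<^sub>M v\<in>W. N)) M"
  using measurable_merge[of B W "\<lambda>_. N"] split_V by simp

lemma distr_merge_split: "distr ((\<Pi>\<^sub>M v\<in>B. N) \<Otimes>\<^sub>M (\<Pi>\<^sub>M v\<in>W. N)) M (merge B W) = M"
proof -
  interpret product_prob_space "\<lambda>_::'v. N" V by (rule product_prob_space_N)
  show ?thesis using distr_merge[of B W] split_V by simp
qed

lemma distr_restrict_split: "(\<Pi>\<^sub>M v\<in>B. N) = distr M (\<Pi>\<^sub>M v\<in>B. N) (\<lambda>\<omega>. restrict \<omega> B)"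
proof -
  interpret product_prob_space "\<lambda>_::'v. N" V by (rule product_prob_space_N)
  show ?thesis by (rule distr_restrict[OF B_V finite_V])
qed

lemma merge_in_space: "merge B W (x, y) \<in> space M"
  using B_V by (auto simp: space_PiM merge_def PiE_def extensional_def space_N)

lemma merge_measurable_right: "(\<lambda>y. merge B W (x, y)) \<in> measurable (\<Pi>\<^sub>M u\<in>I. N) M"
proof -
  have "(\<lambda>y v. merge B W (x, y) v) \<in> measurable (\<Pi>\<^sub>M u\<in>I. N) M"
  proof (rule measurable_PiM_single')
    show "(\<lambda>y. merge B W (x, y) v) \<in> measurable (\<Pi>\<^sub>M u\<in>I. N) N" for v
      unfolding merge_def using coordinate_measurable[of v I] by (auto simp: space_N)
    show "(\<lambda>y v. merge B W (x, y) v) \<in> space (\<Pi>\<^sub>M u\<in>I. N) \<rightarrow> (\<Pi>\<^sub>E v\<in>V. space N)"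
      using merge_in_space by (auto simp: space_PiM)
  qed
  then show ?thesis by simp
qed

lemma restrict_merge: "x \<in> space (\<Pi>\<^sub>M v\<in>B. N) \<Longrightarrow> restrict (merge B W (x, y)) B = x"
  by (auto simp: space_PiM merge_def restrict_def PiE_def extensional_def fun_eq_iff)

lemma restrict_in_space: "x \<in> space (\<Pi>\<^sub>M v\<in>B. N) \<Longrightarrow> restrict x B = x"
  by (auto simp: space_PiM PiE_def extensional_def fun_eq_iff)

lemma integrable_integrate_out:
  fixes g :: "('v \<Rightarrow> real) \<Rightarrow> real"
  assumes g: "integrable M g"
  shows "integrable (\<Pi>\<^sub>M v\<in>B. N) (\<lambda>x. \<integral>y. g (merge B W (x, y)) \<partial>(\<Pi>\<^sub>M v\<in>W. N))"
proof -
  interpret P: pair_sigma_finite "\<Pi>\<^sub>M v\<in>B. N" "\<Pi>\<^sub>M v\<in>W. N"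
    unfolding pair_sigma_finite_def using prob_space_product prob_space_imp_sigma_finite by blast
  have "g \<in> borel_measurable M" using g by auto
  from integrable_distr_eq[OF merge_measurable this]
  have "integrable ((\<Pi>\<^sub>M v\<in>B. N) \<Otimes>\<^sub>M (\<Pi>\<^sub>M v\<in>W. N)) (\<lambda>p. g (merge B W p))"
    using distr_merge_split g by simp
  from P.integrable_fst'[OF this] show ?thesis by simp
qed

lemma integral_indicator_restrict_integrate_out:
  fixes g :: "('v \<Rightarrow> real) \<Rightarrow> real"
  assumes g: "integrable M g" and A': "A' \<in> sets (\<Pi>\<^sub>M v\<in>B. N)"
  defines "\<Phi> \<equiv> \<lambda>x. \<integral>y. g (merge B W (x, y)) \<partial>(\<Pi>\<^sub>M v\<in>W. N)"
  shows "(\<integral>\<omega>. indicator A' (restrict \<omega> B) * g \<omega> \<partial>M)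
    = (\<integral>\<omega>. indicator A' (restrict \<omega> B) * \<Phi> (restrict \<omega> B) \<partial>M)"
proof -
  interpret PV: product_prob_space "\<lambda>_::'v. N" V by (rule product_prob_space_N)
  have \<Phi>: "\<Phi> \<in> borel_measurable (\<Pi>\<^sub>M v\<in>B. N)"
    using integrable_integrate_out[OF g] unfolding \<Phi>_def by auto
  let ?A = "(\<lambda>\<omega>. restrict \<omega> B) -` A' \<inter> space M"
  have "?A \<in> sets M" by (rule measurable_sets[OF restrict_measurable A'])
  from integrable_mult_indicator[OF this g]
  have "integrable M (\<lambda>\<omega>. indicator ?A \<omega> *\<^sub>R g \<omega>)" .
  moreover have "integrable M (\<lambda>\<omega>. indicator ?A \<omega> *\<^sub>R g \<omega>) \<longleftrightarrow>
      integrable M (\<lambda>\<omega>. indicator A' (restrict \<omega> B) * g \<omega>)"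
    by (rule Bochner_Integration.integrable_cong) (auto simp: indicator_def)
  ultimately have "(\<integral>\<omega>. indicator A' (restrict \<omega> B) * g \<omega> \<partial>M)
      = (\<integral>x. (\<integral>y. indicator A' (restrict (merge B W (x, y)) B) * g (merge B W (x, y))
          \<partial>(\<Pi>\<^sub>M v\<in>W. N)) \<partial>(\<Pi>\<^sub>M v\<in>B. N))"
    using PV.product_integral_fold[OF _ split_V(3,4), of "\<lambda>\<omega>. indicator A' (restrict \<omega> B) * g \<omega>"]
      split_V(1) by simp
  also have "\<dots> = (\<integral>x. indicator A' x * \<Phi> x \<partial>(\<Pi>\<^sub>M v\<in>B. N))"
    by (rule Bochner_Integration.integral_cong) (auto simp: restrict_merge restrict_in_space \<Phi>_def)
  also have "\<dots> = (\<integral>\<omega>. indicator A' (restrict \<omega> B) * \<Phi> (restrict \<omega> B) \<partial>M)"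
    using integral_distr[OF restrict_measurable, of "\<lambda>x. indicator A' x * \<Phi> x"] A' \<Phi>
      distr_restrict_split by simp
  finally show ?thesis .
qed

lemma real_cond_exp_integrate_out:
  assumes g: "integrable M g"
  shows "AE \<omega> in M. real_cond_exp M G g \<omega> = (\<integral>y. g (merge B W (\<omega>, y)) \<partial>(\<Pi>\<^sub>M v\<in>W. N))"
proof -
  interpret prob_space M by (rule prob_space_product)
  interpret S: finite_measure_subalgebra M G
    unfolding finite_measure_subalgebra_def finite_measure_subalgebra_axioms_def
    using subalgebra_G emeasure_space_1 by (auto intro!: finite_measureI)
  define \<Phi> where "\<Phi> x = (\<integral>y. g (merge B W (x, y)) \<partial>(\<Pi>\<^sub>M v\<in>W. N))" for x
  have \<Phi>: "integrable (\<Pi>\<^sub>M v\<in>B. N) \<Phi>" "\<Phi> \<in> borel_measurable (\<Pi>\<^sub>M v\<in>B. N)"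
    using integrable_integrate_out[OF g] unfolding \<Phi>_def by auto
  have "AE \<omega> in M. real_cond_exp M G g \<omega> = \<Phi> (restrict \<omega> B)"
  proof (rule S.real_cond_exp_charact)
    show "integrable M (\<lambda>\<omega>. \<Phi> (restrict \<omega> B))"
      using \<Phi> distr_restrict_split integrable_distr_eq[OF restrict_measurable \<Phi>(2)] by simp
    show "(\<lambda>\<omega>. \<Phi> (restrict \<omega> B)) \<in> borel_measurable G"
      using measurable_compose[OF restrict_measurable_G \<Phi>(2)] .
    fix A assume "A \<in> sets G"
    then obtain A' where A': "A' \<in> sets (\<Pi>\<^sub>M v\<in>B. N)" "A = (\<lambda>\<omega>. restrict \<omega> B) -` A' \<inter> space M"
      using sets_G_vimage_restrict by blast
    have "(\<integral>\<omega>\<in>A. h \<omega> \<partial>M) = (\<integral>\<omega>. indicator A' (restrict \<omega> B) * h \<omega> \<partial>M)"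
      for h :: "('v \<Rightarrow> real) \<Rightarrow> real"
      unfolding set_lebesgue_integral_def A'(2)
      by (rule Bochner_Integration.integral_cong) (auto simp: indicator_def)
    then show "(\<integral>\<omega>\<in>A. g \<omega> \<partial>M) = (\<integral>\<omega>\<in>A. \<Phi> (restrict \<omega> B) \<partial>M)"
      using integral_indicator_restrict_integrate_out[OF g A'(1)] unfolding \<Phi>_def by simp
  qed (rule g)
  then show ?thesis by (simp add: \<Phi>_def)
qed

lemma integral_prod_disjoint_supports:
  fixes X :: "'j \<Rightarrow> ('v \<Rightarrow> real) \<Rightarrow> real" and C :: "'j \<Rightarrow> 'v set"
  assumes J: "finite J" and C: "\<And>j. j \<in> J \<Longrightarrow> C j \<subseteq> W" "disjoint_family_on C J"
    and X: "\<And>j. j \<in> J \<Longrightarrow> X j \<in> borel_measurable M"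
    and local: "\<And>j \<omega> \<omega>'. j \<in> J \<Longrightarrow> \<forall>v\<in>B \<union> C j. \<omega> v = \<omega>' v \<Longrightarrow> X j \<omega> = X j \<omega>'"
    and int: "\<forall>j\<in>J. integrable (\<Pi>\<^sub>M v\<in>W. N) (\<lambda>y. X j (merge B W (x, y)))"
  shows "(\<integral>y. (\<Prod>j\<in>J. X j (merge B W (x, y))) \<partial>(\<Pi>\<^sub>M v\<in>W. N))
     = (\<Prod>j\<in>J. \<integral>y. X j (merge B W (x, y)) \<partial>(\<Pi>\<^sub>M v\<in>W. N))"
proof -
  interpret PW: prob_space "\<Pi>\<^sub>M v\<in>W. N" by (rule prob_space_product)
  define h where "h j y = X j (merge B W (x, y))" for j y
  have h_restrict: "X j (merge B W (x, y)) = h j (restrict y (C j))" if "j \<in> J" for j y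
    unfolding h_def using C(1)[OF that] by (intro local[OF that]) (auto simp: merge_def)
  have "h j \<in> borel_measurable (\<Pi>\<^sub>M v\<in>C j. N)" if "j \<in> J" for j
    unfolding h_def using measurable_compose[OF merge_measurable_right X[OF that]] .
  then have "PW.indep_vars (\<lambda>_. borel) (\<lambda>j y. h j (restrict y (C j))) J"
    using PW.indep_vars_compose2[OF PW.indep_vars_restrict[OF indep_coordinates C], of h "\<lambda>_. borel"]
    by simp
  then have "(\<integral>y. (\<Prod>j\<in>J. h j (restrict y (C j))) \<partial>(\<Pi>\<^sub>M v\<in>W. N))
      = (\<Prod>j\<in>J. \<integral>y. h j (restrict y (C j)) \<partial>(\<Pi>\<^sub>M v\<in>W. N))"
    using int h_restrict by (intro PW.indep_vars_lebesgue_integral[OF J]) auto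
  then show ?thesis using h_restrict by simp
qed

lemma real_cond_exp_prod_disjoint_supports:
  fixes X :: "'j \<Rightarrow> ('v \<Rightarrow> real) \<Rightarrow> real" and C :: "'j \<Rightarrow> 'v set"
  assumes J: "finite J" and C: "\<And>j. j \<in> J \<Longrightarrow> C j \<subseteq> W" "disjoint_family_on C J"
    and X: "\<And>j. j \<in> J \<Longrightarrow> integrable M (X j)" and prod: "integrable M (\<lambda>\<omega>. \<Prod>j\<in>J. X j \<omega>)"
    and local: "\<And>j \<omega> \<omega>'. j \<in> J \<Longrightarrow> \<forall>v\<in>B \<union> C j. \<omega> v = \<omega>' v \<Longrightarrow> X j \<omega> = X j \<omega>'"
  shows "AE \<omega> in M. real_cond_exp M G (\<lambda>\<omega>. \<Prod>j\<in>J. X j \<omega>) \<omega> = (\<Prod>j\<in>J. real_cond_exp M G (X j) \<omega>)"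
proof -
  interpret P: pair_sigma_finite "\<Pi>\<^sub>M v\<in>B. N" "\<Pi>\<^sub>M v\<in>W. N"
    unfolding pair_sigma_finite_def using prob_space_product prob_space_imp_sigma_finite by blast
  have Xm: "X j \<in> borel_measurable M" if "j \<in> J" for j using X[OF that] by auto
  have X_pair: "integrable ((\<Pi>\<^sub>M v\<in>B. N) \<Otimes>\<^sub>M (\<Pi>\<^sub>M v\<in>W. N)) (\<lambda>p. X j (merge B W p))"
    if "j \<in> J" for j
    using integrable_distr_eq[OF merge_measurable Xm[OF that]] distr_merge_split X[OF that] by simp
  have "AE x in \<Pi>\<^sub>M v\<in>B. N. \<forall>j\<in>J. integrable (\<Pi>\<^sub>M v\<in>W. N) (\<lambda>y. X j (merge B W (x, y)))"
    by (rule AE_finite_allI[OF J]) (use P.AE_integrable_fst'[OF X_pair] in simp)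
  then have "AE x in \<Pi>\<^sub>M v\<in>B. N. (\<integral>y. (\<Prod>j\<in>J. X j (merge B W (x, y))) \<partial>(\<Pi>\<^sub>M v\<in>W. N))
      = (\<Prod>j\<in>J. \<integral>y. X j (merge B W (x, y)) \<partial>(\<Pi>\<^sub>M v\<in>W. N))"
    by eventually_elim (rule integral_prod_disjoint_supports[OF J C Xm local])
  then have "AE x in distr M (\<Pi>\<^sub>M v\<in>B. N) (\<lambda>\<omega>. restrict \<omega> B).
      (\<integral>y. (\<Prod>j\<in>J. X j (merge B W (x, y))) \<partial>(\<Pi>\<^sub>M v\<in>W. N))
      = (\<Prod>j\<in>J. \<integral>y. X j (merge B W (x, y)) \<partial>(\<Pi>\<^sub>M v\<in>W. N))"
    by (subst distr_restrict_split[symmetric])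
  from AE_distrD[OF restrict_measurable this]
  have "AE \<omega> in M. (\<integral>y. (\<Prod>j\<in>J. X j (merge B W (\<omega>, y))) \<partial>(\<Pi>\<^sub>M v\<in>W. N))
      = (\<Prod>j\<in>J. \<integral>y. X j (merge B W (\<omega>, y)) \<partial>(\<Pi>\<^sub>M v\<in>W. N))"
    by simp
  moreover have "AE \<omega> in M. \<forall>j\<in>J. real_cond_exp M G (X j) \<omega>
      = (\<integral>y. X j (merge B W (\<omega>, y)) \<partial>(\<Pi>\<^sub>M v\<in>W. N))"
    using real_cond_exp_integrate_out[OF X] by (intro AE_finite_allI[OF J])
  ultimately show ?thesis
    using real_cond_exp_integrate_out[OF prod] by eventually_elim simp
qed

end

text \<open>The proof uses only the girth bound, the finiteness of the factor graph, the hypothesis on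
  the factor tuples and the assumptions on Fto.\<close>

theorem mainTheorem6:
  fixes r d L :: nat and \<delta> K :: real
    and f :: "(nat \<Rightarrow> real) \<Rightarrow> real"
    and V :: "'v set" and E :: "'a set" and vx :: "'a \<Rightarrow> nat \<Rightarrow> 'v"
    and Fto Fv :: "nat \<Rightarrow> (nat \<Rightarrow> real) \<Rightarrow> real"
    and i :: 'v and b :: 'a and l :: nat and s :: "'v \<Rightarrow> nat"
  assumes r2: "2 \<le> r"
    and f_pred: "\<forall>x\<in>cube r. f x \<in> {0, 1}"
    and f_deg1: "\<forall>\<iota><r. fourier r f {\<iota>} = 0"
    and delta_pos: "0 < \<delta>"
    and L_def: "L = nat \<lfloor>1 / \<delta>\<rfloor>"
    and V_fin: "finite V" and E_fin: "finite E"
    and edges: "\<forall>a\<in>E. inj_on (vx a) {..<r} \<and> vset vx r a \<subseteq> V"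
    and deg: "\<forall>j\<in>V. card (fdeg E vx r j) = d"
    and idx_reg: "\<forall>j\<in>V. \<forall>\<iota><r. card {a\<in>E. vx a \<iota> = j} * r = d"
    and girth: "no_short_cycle E vx r (4 * L + 4)"
    and K_pos: "0 < K"
    and Fto_bd: "\<forall>k<L. \<forall>y. \<bar>Fto k y\<bar> \<le> K"
    and Fto_meas: "\<forall>k<L. Fto k \<in> borel_measurable (\<Pi>\<^sub>M \<kappa>\<in>{..<k}. borel)"
    and Fv_bd: "\<forall>k<L. \<forall>y. \<bar>Fv k y\<bar> \<le> K"
    and Fv_meas: "\<forall>k<L. Fv k \<in> borel_measurable (\<Pi>\<^sub>M \<kappa>\<in>{..<k}. borel)"
    and i_V: "i \<in> V"
    and b_i: "b \<in> fdeg E vx r i"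
    and l_bds: "1 \<le> l" "l \<le> L"
  shows "AE \<omega> in gauss_space V \<delta>.
     real_cond_exp (gauss_space V \<delta>) (gen_sigma (gauss_space V \<delta>) (vball V E vx r i l))
       (\<lambda>\<omega>. \<Prod>j\<in>vset vx r b - {i}. (umsg r E vx d f Fto \<omega> l j b) ^ s j) \<omega>
   = (\<Prod>j\<in>vset vx r b - {i}.
       real_cond_exp (gauss_space V \<delta>) (gen_sigma (gauss_space V \<delta>) (vball V E vx r i l))
         (\<lambda>\<omega>. (umsg r E vx d f Fto \<omega> l j b) ^ s j) \<omega>)"
proof -
  let ?N = "density lborel (normal_density 0 (sqrt \<delta>))" and ?B = "vball V E vx r i l"
  have "prob_space ?N" using delta_pos by (simp add: prob_space_normal_density)
  moreover have "?B \<subseteq> V" unfolding vball_def by blast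
  ultimately interpret product_split ?N V ?B
    using V_fin by (simp add: product_split_def real_product_space_def product_split_axioms_def)
  have b: "b \<in> E" "i \<in> vset vx r b" using b_i unfolding fdeg_def by auto
  have V: "\<forall>a\<in>E. vset vx r a \<subseteq> V" using edges by blast
  have moments: "integrable ?N (\<lambda>t. (1 + \<bar>t\<bar>) ^ q)" for q
    using delta_pos by (intro integrable_normal_density_moments) simp
  note integrable = integrable_umsg_power_prod[OF moments Fto_bd Fto_meas _ E_fin V l_bds(2)]
  have "AE \<omega> in M. real_cond_exp M G (\<lambda>\<omega>. \<Prod>j\<in>vset vx r b - {i}. umsg r E vx d f Fto \<omega> l j b ^ s j) \<omega>
      = (\<Prod>j\<in>vset vx r b - {i}. real_cond_exp M G (\<lambda>\<omega>. umsg r E vx d f Fto \<omega> l j b ^ s j) \<omega>)"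
  proof (rule real_cond_exp_prod_disjoint_supports[where C = "\<lambda>j. msg_deps E vx r l j b - ?B"])
    show "disjoint_family_on (\<lambda>j. msg_deps E vx r l j b - ?B) (vset vx r b - {i})"
      using b V no_short_cycle_mono[OF girth] l_bds(2) by (intro msg_deps_disjoint_outside_ball) simp_all
    show "integrable M (\<lambda>\<omega>. umsg r E vx d f Fto \<omega> l j b ^ s j)" for j
      using integrable[where J = "{j}"] K_pos by simp
    show "umsg r E vx d f Fto \<omega> l j b ^ s j = umsg r E vx d f Fto \<omega>' l j b ^ s j"
      if "\<forall>v\<in>?B \<union> (msg_deps E vx r l j b - ?B). \<omega> v = \<omega>' v" for j \<omega> \<omega>'
      using umsg_local[of E vx r l j b \<omega> \<omega>'] edges that by auto
    show "msg_deps E vx r l j b - ?B \<subseteq> V - ?B" for j using msg_deps_subset[OF V] by blast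
  qed (use integrable K_pos in \<open>simp_all add: vset_def\<close>)
  then show ?thesis unfolding gauss_space_def .
qed

end
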